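(* Let $A:\mathbb{R}^n\rightrightarrows\mathbb{R}^n$ be maximally monotone, let $x^*$ satisfy $0\in A(x^* )$, and let $\tilde A=I-J_A$ with $J_A=(I+A)^{-1}$. Let $r\geqslant2$ and $0<C\leqslant1$. Let $(x_k),(z_k)$ be sequences in $\mathbb{R}^n$ with $x_0=z_0$ satisfying, for all $k\geqslant0$, $$z_k=\frac{k}{r}(x_{k+1}-x_k)+\Big(1+\frac{k}{r}\Big)\tilde A(x_{k+1})+x_{k+1},\qquad z_{k+1}=z_k-\frac{C}{r}\tilde A(x_{k+1}).$$ Then for every $k\geqslant1$, $$\|\tilde A(x_k)\|^2\leqslant\frac{(r^3-r^2)\|x_0-x^*\|^2}{Ck[k+3r-C(k+1)]},\qquad \langle\tilde A(x_k),x_k-x^*\rangle\leqslant\frac{(r^2-r)\|x_0-x^*\|^2}{2Ck}.$$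
   Context: $J_A$ is the resolvent of $A$ and $\tilde A=I-J_A$ its Yosida approximation. $\|\cdot\|$ is the Euclidean norm. *)

theory Defs
  imports "HOL-Analysis.Analysis"
begin

definition monotone_op :: "('a::real_inner \<Rightarrow> 'a set) \<Rightarrow> bool" where
  "monotone_op A \<longleftrightarrow> (\<forall>x y u v. u \<in> A x \<longrightarrow> v \<in> A y \<longrightarrow> inner (x - y) (u - v) \<ge> 0)"

definition maximal_monotone :: "('a::real_inner \<Rightarrow> 'a set) \<Rightarrow> bool" where
  "maximal_monotone A \<longleftrightarrow> monotone_op A \<and>
     (\<forall>B. monotone_op B \<and> (\<forall>x. A x \<subseteq> B x) \<longrightarrow> B = A)"

text \<open>Resolvent J_A = (I + A)^{-1}: J_A x is the point p with x \<in> p + A p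
(single-valued and everywhere defined for maximally monotone A by Minty's theorem).\<close>
definition resolvent :: "('a::real_inner \<Rightarrow> 'a set) \<Rightarrow> 'a \<Rightarrow> 'a" where
  "resolvent A x = (THE p. x - p \<in> A p)"

definition yosida :: "('a::real_inner \<Rightarrow> 'a set) \<Rightarrow> 'a \<Rightarrow> 'a" where
  "yosida A x = x - resolvent A x"

end

theory Submission
  imports Defs
begin

text \<open>
  The Yosida approximation Y = I - J_A of a maximally monotone A is firmly nonexpansive and
  vanishes at zeros of A. This needs J_A to be defined everywhere, i.e. Minty's theorem, which in
  finite dimension follows from a finite intersection argument: for finitely many graph points,
  maximising a concave quadratic over a convex hull produces a point monotonically related to
  all of them.

  The rate comes from the Lyapunov function
  E_k = 2Crk <Y x_k, x_k - x*> + (Ck^2 + (Cr - C^2)k) |Y x_k|^2 + r^2(r-1) |z_k - x*|^2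
        - 2Crk <Y x_k, z_k - x*>.
  The drop E_k - E_(k+1) is a nonnegative combination of firm nonexpansiveness at
  (x_(k+1), x_k) and at (x_(k+1), x*), plus a positive semidefinite quadratic form in
  Y x_(k+1) and Y x_k. So E_k <= E_0 = r^2(r-1) |x_0 - x*|^2, and completing the square in
  z_k - x* bounds E_k from below by 2Crk <Y x_k, x_k - x*> + Ck(k + r - C - Ck/(r-1)) |Y x_k|^2.
\<close>

section \<open>Minty's theorem in finite dimension\<close>

lemma monotone_opD:
  assumes "monotone_op A" "u \<in> A x" "v \<in> A y"
  shows "0 \<le> inner (x - y) (u - v)"
  using assms unfolding monotone_op_def by blast

lemma maximal_monotone_imp_monotone_op: "maximal_monotone A \<Longrightarrow> monotone_op A"
  unfolding maximal_monotone_def by blast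

lemma maximal_monotone_memI:
  assumes mm: "maximal_monotone A"
    and related: "\<And>y v. v \<in> A y \<Longrightarrow> 0 \<le> inner (p - y) (w - v)"
  shows "w \<in> A p"
proof -
  define B where "B y = (if y = p then insert w (A p) else A y)" for y
  have mono: "monotone_op A" using mm by (rule maximal_monotone_imp_monotone_op)
  have B_cases: "u \<in> A x \<or> (x = p \<and> u = w)" if "u \<in> B x" for u x
    using that unfolding B_def by (auto split: if_splits)
  have "monotone_op B"
    unfolding monotone_op_def
  proof (intro allI impI)
    fix x y u v assume "u \<in> B x" "v \<in> B y"
    then consider "u \<in> A x" "v \<in> A y" | "u \<in> A x" "y = p" "v = w"
      | "x = p" "u = w" "v \<in> A y" | "x = p" "u = w" "y = p" "v = w"
      using B_cases by blast
    then show "0 \<le> inner (x - y) (u - v)"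
    proof cases
      case 1
      then show ?thesis using mono by (simp add: monotone_opD)
    next
      case 2
      have "inner (x - y) (u - v) = inner (p - x) (w - u)"
        using 2 by (metis inner_minus_left inner_minus_right minus_diff_eq)
      then show ?thesis using related[OF \<open>u \<in> A x\<close>] by simp
    next
      case 3
      then show ?thesis using related by simp
    next
      case 4
      then show ?thesis by simp
    qed
  qed
  moreover have "\<forall>x. A x \<subseteq> B x" unfolding B_def by auto
  ultimately have "B = A" using mm unfolding maximal_monotone_def by (elim conjE allE[of _ B]) blast
  moreover have "w \<in> B p" unfolding B_def by simp
  ultimately show ?thesis by simp
qed

lemma maximal_monotone_nonempty:
  assumes "maximal_monotone A"
  obtains y v where "v \<in> A y"
proof -
  have "0 \<in> A 0" if "\<And>y v. v \<notin> A y"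
    using maximal_monotone_memI[OF assms] that by blast
  then show ?thesis using that by blast
qed

lemma monotone_weighted_inner_le:
  fixes x u :: "'i \<Rightarrow> 'a::real_inner"
  assumes l_nonneg: "\<And>i. i \<in> I \<Longrightarrow> 0 \<le> l i" and l_sum: "sum l I = 1"
    and mono: "\<And>i j. i \<in> I \<Longrightarrow> j \<in> I \<Longrightarrow> 0 \<le> inner (x i - x j) (u i - u j)"
  shows "inner (\<Sum>i\<in>I. l i *\<^sub>R x i) (\<Sum>i\<in>I. l i *\<^sub>R u i) \<le> (\<Sum>i\<in>I. l i * inner (x i) (u i))"
proof -
  define M where "M = inner (\<Sum>i\<in>I. l i *\<^sub>R x i) (\<Sum>i\<in>I. l i *\<^sub>R u i)"
  define T where "T = (\<Sum>i\<in>I. l i * inner (x i) (u i))"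
  have mixed: "(\<Sum>i\<in>I. \<Sum>j\<in>I. l i * l j * inner (x i) (u j)) = M"
    unfolding M_def by (subst sum.swap) (simp add: inner_sum_left inner_sum_right sum_distrib_left mult_ac)
  have mixed': "(\<Sum>i\<in>I. \<Sum>j\<in>I. l i * l j * inner (x j) (u i)) = M"
    unfolding M_def by (simp add: inner_sum_left inner_sum_right sum_distrib_left mult.assoc)
  have diag: "(\<Sum>i\<in>I. \<Sum>j\<in>I. l i * l j * inner (x i) (u i)) = T"
    unfolding T_def using l_sum
    by (simp add: sum_distrib_left[symmetric] sum_distrib_right[symmetric] mult.commute mult.left_commute)
  have diag': "(\<Sum>i\<in>I. \<Sum>j\<in>I. l i * l j * inner (x j) (u j)) = T"
    using diag by (subst sum.swap) (simp add: mult.commute)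
  have "0 \<le> (\<Sum>i\<in>I. \<Sum>j\<in>I. l i * l j * inner (x i - x j) (u i - u j))"
    using mono l_nonneg by (intro sum_nonneg) auto
  also have "\<dots> = (\<Sum>i\<in>I. \<Sum>j\<in>I. l i * l j * inner (x i) (u i))
      - (\<Sum>i\<in>I. \<Sum>j\<in>I. l i * l j * inner (x i) (u j))
      - (\<Sum>i\<in>I. \<Sum>j\<in>I. l i * l j * inner (x j) (u i))
      + (\<Sum>i\<in>I. \<Sum>j\<in>I. l i * l j * inner (x j) (u j))"
    by (simp add: algebra_simps sum.distrib sum_subtractf)
  finally show ?thesis unfolding mixed mixed' diag diag' M_def T_def by simp
qed

lemma nonpos_of_le_quadratic_near_0:
  fixes d c :: real
  assumes "\<And>s. 0 < s \<Longrightarrow> s \<le> 1 \<Longrightarrow> s * d \<le> s\<^sup>2 * c"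
  shows "d \<le> 0"
proof (rule ccontr)
  assume "\<not> d \<le> 0"
  then have d: "0 < d" by simp
  define s where "s = min 1 (d / (2 * \<bar>c\<bar> + 1))"
  have s: "0 < s" "s \<le> 1" using d by (auto simp: s_def)
  have "s * d \<le> s * (s * c)" using assms[OF s] by (simp add: power2_eq_square mult.assoc)
  then have "d \<le> s * c" using s by simp
  also have "\<dots> \<le> s * \<bar>c\<bar>" using s by (simp add: mult_left_mono)
  also have "\<dots> \<le> d / (2 * \<bar>c\<bar> + 1) * \<bar>c\<bar>" unfolding s_def by (intro mult_right_mono) auto
  also have "\<dots> < d" using d by (simp add: field_simps add_pos_nonneg)
  finally show False by simp
qed

lemma finite_monotone_minty:
  fixes P :: "('a::euclidean_space \<times> 'a) set"
  assumes fin: "finite P"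
    and mono: "\<And>x u y v. (x, u) \<in> P \<Longrightarrow> (y, v) \<in> P \<Longrightarrow> 0 \<le> inner (x - y) (u - v)"
  obtains p where "\<And>x u. (x, u) \<in> P \<Longrightarrow> inner (p - x) (p + u) \<le> 0"
proof (cases "P = {}")
  case True
  then show ?thesis using that by blast
next
  case False
  define T where "T = (\<lambda>(x, u). (x, u, inner x u)) ` P"
  define \<psi> where "\<psi> W = - snd (snd W) - (norm (fst W - fst (snd W)))\<^sup>2 / 4" for W :: "'a \<times> 'a \<times> real"
  \<comment> \<open>At a maximiser W = (X, U, \<beta>) of the concave \<psi>, first-order optimality towards each lifted
    pair shows that p = (X - U)/2 satisfies every constraint up to \<psi> W, and \<psi> W \<le> 0 by
    monotonicity of the pairs combined with the weights of W.\<close>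
  have finT: "finite T" using fin by (simp add: T_def)
  have "compact (convex hull T)" "convex hull T \<noteq> {}"
    using finT False by (auto simp: T_def finite_imp_compact_convex_hull)
  moreover have "continuous_on (convex hull T) \<psi>" unfolding \<psi>_def by (intro continuous_intros) auto
  ultimately obtain W where W: "W \<in> convex hull T"
    and W_max: "\<And>W'. W' \<in> convex hull T \<Longrightarrow> \<psi> W' \<le> \<psi> W"
    using continuous_attains_sup by metis
  obtain X U \<beta> where W_eq: "W = (X, U, \<beta>)" by (cases W) auto
  define p where "p = (1/2) *\<^sub>R (X - U)"
  have p_opt: "inner (p - x) (p + u) \<le> \<psi> W" if "(x, u) \<in> P" for x u
  proof -
    have "s * (inner (p - x) (p + u) - \<psi> W) \<le> s\<^sup>2 * ((norm ((x - u) - (X - U)))\<^sup>2 / 4)"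
      if s: "0 < s" "s \<le> 1" for s
    proof -
      have "(x, u, inner x u) \<in> convex hull T"
        using \<open>(x, u) \<in> P\<close> by (intro hull_inc) (force simp: T_def)
      then have "(1 - s) *\<^sub>R W + s *\<^sub>R (x, u, inner x u) \<in> convex hull T"
        using W s by (intro convexD) auto
      then have "\<psi> ((1 - s) *\<^sub>R W + s *\<^sub>R (x, u, inner x u)) \<le> \<psi> W" by (rule W_max)
      moreover have "\<psi> ((1 - s) *\<^sub>R W + s *\<^sub>R (x, u, inner x u))
          = \<psi> W + s * (inner (p - x) (p + u) - \<psi> W) - s\<^sup>2 * ((norm ((x - u) - (X - U)))\<^sup>2 / 4)"
        unfolding W_eq \<psi>_def p_def power2_norm_eq_inner
        by (simp add: inner_diff_left inner_diff_right inner_add_left inner_add_right inner_commute)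
          (simp add: field_simps power2_eq_square)
      ultimately show ?thesis by simp
    qed
    then have "inner (p - x) (p + u) - \<psi> W \<le> 0" by (rule nonpos_of_le_quadratic_near_0)
    then show ?thesis by simp
  qed
  have "\<psi> W \<le> 0"
  proof -
    obtain l where l_nonneg: "\<forall>t\<in>T. 0 \<le> l t" and l_sum: "sum l T = 1" and W_sum: "(\<Sum>t\<in>T. l t *\<^sub>R t) = W"
      using W unfolding convex_hull_finite[OF finT] by blast
    have X: "X = (\<Sum>t\<in>T. l t *\<^sub>R fst t)"
      using arg_cong[OF W_sum, of fst] unfolding W_eq by (simp add: fst_sum)
    have U: "U = (\<Sum>t\<in>T. l t *\<^sub>R fst (snd t))"
      using arg_cong[OF W_sum, of "\<lambda>w. fst (snd w)"] unfolding W_eq by (simp add: fst_sum snd_sum)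
    have "\<beta> = (\<Sum>t\<in>T. l t * snd (snd t))"
      using arg_cong[OF W_sum, of "\<lambda>w. snd (snd w)"] unfolding W_eq by (simp add: snd_sum)
    also have "\<dots> = (\<Sum>t\<in>T. l t * inner (fst t) (fst (snd t)))"
      by (intro sum.cong) (auto simp: T_def)
    finally have \<beta>: "\<beta> = (\<Sum>t\<in>T. l t * inner (fst t) (fst (snd t)))" .
    have "inner X U \<le> \<beta>"
      unfolding X U \<beta> using l_nonneg l_sum mono
      by (intro monotone_weighted_inner_le) (auto simp: T_def)
    moreover have "\<psi> W = inner X U - \<beta> - (norm (X + U))\<^sup>2 / 4"
      unfolding W_eq \<psi>_def power2_norm_eq_inner
      by (simp add: inner_diff_left inner_diff_right inner_add_left inner_add_right inner_commute)
        (simp add: field_simps)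
    moreover have "0 \<le> (norm (X + U))\<^sup>2" by simp
    ultimately show ?thesis by linarith
  qed
  show ?thesis
  proof (rule that)
    fix x u assume "(x, u) \<in> P"
    then show "inner (p - x) (p + u) \<le> 0" using p_opt \<open>\<psi> W \<le> 0\<close> by (meson order_trans)
  qed
qed

lemma compact_inner_diff_add_le_0:
  fixes y w :: "'a::euclidean_space"
  shows "compact {p. inner (p - y) (p + w) \<le> 0}"
proof -
  define c where "c = (1/2) *\<^sub>R (y - w)"
  define \<rho> where "\<rho> = norm (y + w) / 2"
  have square: "inner (p - y) (p + w) = (norm (p - c))\<^sup>2 - \<rho>\<^sup>2" for p
    unfolding c_def \<rho>_def power2_norm_eq_inner power_divide
    by (simp add: inner_diff_left inner_diff_right inner_add_left inner_add_right inner_commute)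
      (simp add: field_simps)
  have "{p. inner (p - y) (p + w) \<le> 0} \<subseteq> cball c \<rho>"
  proof
    fix p assume "p \<in> {p. inner (p - y) (p + w) \<le> 0}"
    then have "(norm (p - c))\<^sup>2 \<le> \<rho>\<^sup>2" using square by simp
    then have "norm (p - c) \<le> \<rho>" by (rule power2_le_imp_le) (simp add: \<rho>_def)
    then show "p \<in> cball c \<rho>" by (simp add: dist_norm norm_minus_commute)
  qed
  moreover have "closed {p. inner (p - y) (p + w) \<le> 0}"
    by (intro closed_Collect_le continuous_intros)
  ultimately show ?thesis
    by (meson bounded_cball bounded_subset compact_eq_bounded_closed)
qed

theorem maximal_monotone_minty:
  fixes A :: "'a::euclidean_space \<Rightarrow> 'a set"
  assumes mm: "maximal_monotone A"
  obtains p where "b - p \<in> A p"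
proof -
  have mono: "monotone_op A" using mm by (rule maximal_monotone_imp_monotone_op)
  obtain y0 v0 where "v0 \<in> A y0" using mm by (rule maximal_monotone_nonempty)
  \<comment> \<open>K (y, v) is the set of p for which (p, b - p) is monotonically related to (y, v).\<close>
  define K where "K = (\<lambda>(y, v). {p. inner (p - y) (p + (v - b)) \<le> 0})"
  define G where "G = {(y, v). v \<in> A y}"
  have "K (y0, v0) \<inter> \<Inter> (K ` G) \<noteq> {}"
  proof (rule compact_imp_fip)
    show "compact (K (y0, v0))" by (simp add: K_def compact_inner_diff_add_le_0)
    show "closed T" if "T \<in> K ` G" for T
      using that by (auto simp: K_def intro!: closed_Collect_le continuous_intros)
    fix F assume "finite F" "F \<subseteq> K ` G"
    then obtain H where H: "H \<subseteq> G" "finite H" "F = K ` H"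
      using finite_subset_image by metis
    define P where "P = (\<lambda>(y, v). (y, v - b)) ` insert (y0, v0) H"
    have "finite P" using H by (simp add: P_def)
    moreover have "0 \<le> inner (x - y) (u - v)" if "(x, u) \<in> P" "(y, v) \<in> P" for x u y v
      using that H \<open>v0 \<in> A y0\<close> mono by (auto simp: P_def G_def dest: monotone_opD)
    ultimately obtain p where p: "\<And>x u. (x, u) \<in> P \<Longrightarrow> inner (p - x) (p + u) \<le> 0"
      using finite_monotone_minty by blast
    have "p \<in> K g" if "g \<in> insert (y0, v0) H" for g
    proof -
      obtain y v where g: "g = (y, v)" by fastforce
      have "(y, v - b) \<in> P" using that unfolding P_def g by (rule rev_image_eqI) simp
      then show ?thesis using p by (simp add: K_def g)
    qed
    then show "K (y0, v0) \<inter> \<Inter> F \<noteq> {}" unfolding H(3) by blast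
  qed
  then obtain p where p: "\<And>g. g \<in> G \<Longrightarrow> p \<in> K g" by blast
  have "b - p \<in> A p"
  proof (rule maximal_monotone_memI[OF mm])
    fix y v assume "v \<in> A y"
    then have "inner (p - y) (p + (v - b)) \<le> 0" using p[of "(y, v)"] by (simp add: K_def G_def)
    moreover have "(b - p) - v = - (p + (v - b))" by simp
    ultimately show "0 \<le> inner (p - y) ((b - p) - v)" by (simp only: inner_minus_right)
  qed
  then show thesis by (rule that)
qed

lemma resolvent_eqI:
  assumes mono: "monotone_op A" and p: "b - p \<in> A p"
  shows "resolvent A b = p"
  unfolding resolvent_def
proof (rule the_equality)
  fix q assume "b - q \<in> A q"
  with mono p have "0 \<le> inner (q - p) ((b - q) - (b - p))" by (intro monotone_opD)
  moreover have "inner (q - p) ((b - q) - (b - p)) = - inner (q - p) (q - p)"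
    by (simp add: inner_diff_left inner_diff_right inner_commute)
  ultimately have "inner (q - p) (q - p) \<le> 0" by linarith
  then have "inner (q - p) (q - p) = 0" using inner_ge_zero[of "q - p"] by linarith
  then show "q = p" by simp
qed (fact p)

lemma resolvent_mem:
  fixes A :: "'a::euclidean_space \<Rightarrow> 'a set"
  assumes mm: "maximal_monotone A"
  shows "b - resolvent A b \<in> A (resolvent A b)"
proof -
  obtain p where p: "b - p \<in> A p" using mm by (rule maximal_monotone_minty)
  moreover have "resolvent A b = p"
    using maximal_monotone_imp_monotone_op[OF mm] p by (rule resolvent_eqI)
  ultimately show ?thesis by simp
qed

lemma yosida_eq_0:
  assumes "monotone_op A" "0 \<in> A x"
  shows "yosida A x = 0"
  using resolvent_eqI[of A x x] assms by (simp add: yosida_def)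

lemma yosida_firmly_nonexpansive:
  fixes A :: "'a::euclidean_space \<Rightarrow> 'a set"
  assumes mm: "maximal_monotone A"
  shows "inner (yosida A x - yosida A y) (yosida A x - yosida A y) \<le> inner (yosida A x - yosida A y) (x - y)"
proof -
  define d where "d = yosida A x - yosida A y"
  have "0 \<le> inner (resolvent A x - resolvent A y) d"
    using monotone_opD[OF maximal_monotone_imp_monotone_op[OF mm] resolvent_mem[OF mm] resolvent_mem[OF mm]]
    unfolding d_def yosida_def .
  moreover have "resolvent A x - resolvent A y = (x - y) - d"
    unfolding d_def yosida_def by simp
  ultimately have "0 \<le> inner ((x - y) - d) d" by simp
  then show ?thesis unfolding d_def[symmetric] by (simp add: inner_diff_left inner_diff_right inner_commute)
qed

section \<open>The Lyapunov function\<close>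

definition lyapunov :: "real \<Rightarrow> real \<Rightarrow> real \<Rightarrow> 'a::real_inner \<Rightarrow> 'a \<Rightarrow> 'a \<Rightarrow> real" where
  "lyapunov r C k y v w = 2*C*r*k * inner v y + (C*k^2 + (C*r - C^2)*k) * inner v v
     + r^2*(r-1) * inner w w - 2*C*r*k * inner v w"

lemma lyapunov_step_identity:
  fixes a b u v :: "'a::real_inner" and k r C :: real
  assumes "r \<noteq> 0"
  defines "w \<equiv> (k/r) *\<^sub>R (a - b) + (1 + k/r) *\<^sub>R u + a"
  shows "lyapunov r C k b v w - lyapunov r C (k + 1) a u (w - (C/r) *\<^sub>R u)
    = 2*C*k*(k+r) * (inner (u - v) (a - b) - inner (u - v) (u - v))
      + 2*r*(r-1)*C * (inner u a - inner u u)
      + ((3*C*k^2 + (5*C*r - 2*C - C^2)*k + 4*r^2*C - 3*r*C - C - r*C^2) * inner u u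
         - 6*C*k*(k+r) * inner u v + (3*C*k^2 + (3*C*r - C^2)*k) * inner v v)"
  using assms unfolding lyapunov_def w_def
  by (simp add: inner_add_left inner_add_right inner_diff_left inner_diff_right inner_commute
      field_simps power2_eq_square)

lemma inner_quadratic_form_nonneg:
  fixes u v :: "'a::real_inner" and a b c :: real
  assumes a: "0 < a" and disc: "b\<^sup>2 \<le> 4*a*c"
  shows "0 \<le> a * inner u u - b * inner u v + c * inner v v"
proof -
  have "0 \<le> inner ((2*a) *\<^sub>R u - b *\<^sub>R v) ((2*a) *\<^sub>R u - b *\<^sub>R v)" by simp
  also have "\<dots> = 4*a*(a * inner u u - b * inner u v) + b\<^sup>2 * inner v v"
    by (simp add: inner_diff_left inner_diff_right inner_commute power2_eq_square algebra_simps)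
  also have "\<dots> \<le> 4*a*(a * inner u u - b * inner u v + c * inner v v)"
    using mult_right_mono[OF disc inner_ge_zero[of v]] by (simp add: algebra_simps)
  finally show ?thesis using a by (simp add: zero_le_mult_iff)
qed

lemma lyapunov_residual_nonneg:
  fixes u v :: "'a::real_inner" and k r C :: real
  assumes r: "2 \<le> r" and C: "0 < C" "C \<le> 1" and k: "0 \<le> k"
  shows "0 \<le> (3*C*k^2 + (5*C*r - 2*C - C^2)*k + 4*r^2*C - 3*r*C - C - r*C^2) * inner u u
      - 6*C*k*(k+r) * inner u v + (3*C*k^2 + (3*C*r - C^2)*k) * inner v v"
proof (rule inner_quadratic_form_nonneg)
  have rC: "r*C \<le> r" using r C by (simp add: mult_left_le)
  have r2: "2*r \<le> r^2" using r by (simp add: power2_eq_square)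
  have const: "0 < 4*r^2 - 3*r - 1 - r*C" using rC r2 r by linarith
  have "0 \<le> (5*r - 2 - C)*k" using r C k by simp
  then have "0 < 3*k^2 + (5*r - 2 - C)*k + (4*r^2 - 3*r - 1 - r*C)"
    using const zero_le_power2[of k] by linarith
  from mult_pos_pos[OF C(1) this]
  show "0 < 3*C*k^2 + (5*C*r - 2*C - C^2)*k + 4*r^2*C - 3*r*C - C - r*C^2"
    by (simp add: algebra_simps power2_eq_square)
  have "0 \<le> (6*r - 6 - 6*C)*k^2" using r C by simp
  moreover have "0 \<le> (18*r^2 - 11*r*C - 15*r + 2*C + C^2 - 3)*k"
  proof -
    have "20 \<le> r*(18*r - 26)" using r by (intro mult_mono[of 2 r 10, simplified]) auto
    then have "20 \<le> 18*r^2 - 26*r" by (simp add: algebra_simps power2_eq_square)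
    then have "0 \<le> 18*r^2 - 11*r*C - 15*r + 2*C + C^2 - 3"
      using rC C zero_le_power2[of C] by linarith
    then show ?thesis using k by simp
  qed
  moreover have "0 \<le> (4*r^2 - 3*r - 1 - r*C)*(3*r - C)" using const r C by simp
  ultimately have "0 \<le> 4*k*C^2*((6*r - 6 - 6*C)*k^2 + (18*r^2 - 11*r*C - 15*r + 2*C + C^2 - 3)*k
      + (4*r^2 - 3*r - 1 - r*C)*(3*r - C))"
    using k by simp
  also have "\<dots> = 4*(3*C*k^2 + (5*C*r - 2*C - C^2)*k + 4*r^2*C - 3*r*C - C - r*C^2)
      * (3*C*k^2 + (3*C*r - C^2)*k) - (6*C*k*(k+r))\<^sup>2"
    by algebra
  finally show "(6*C*k*(k+r))\<^sup>2 \<le> 4*(3*C*k^2 + (5*C*r - 2*C - C^2)*k + 4*r^2*C - 3*r*C - C - r*C^2)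
      * (3*C*k^2 + (3*C*r - C^2)*k)"
    by simp
qed

lemma lyapunov_decrease:
  fixes a b u v :: "'a::real_inner" and k r C :: real
  assumes r: "2 \<le> r" and C: "0 < C" "C \<le> 1" and k: "0 \<le> k"
    and firm_u: "inner u u \<le> inner u a"
    and firm_uv: "inner (u - v) (u - v) \<le> inner (u - v) (a - b)"
  defines "w \<equiv> (k/r) *\<^sub>R (a - b) + (1 + k/r) *\<^sub>R u + a"
  shows "lyapunov r C (k + 1) a u (w - (C/r) *\<^sub>R u) \<le> lyapunov r C k b v w"
proof -
  have "0 \<le> 2*C*k*(k+r) * (inner (u - v) (a - b) - inner (u - v) (u - v))"
    using firm_uv r C k by simp
  moreover have "0 \<le> 2*r*(r-1)*C * (inner u a - inner u u)"
    using firm_u r C by simp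
  moreover have "r \<noteq> 0" using r by simp
  ultimately show ?thesis
    using lyapunov_step_identity[where r=r and C=C and k=k and a=a and b=b and u=u and v=v]
      lyapunov_residual_nonneg[OF r C k, of u v]
    unfolding w_def by linarith
qed

lemma lyapunov_lower_bound:
  fixes y v w :: "'a::real_inner" and k r C :: real
  assumes r: "1 < r"
  shows "2*C*r*k * inner v y + C*k*(k + r - C - C*k/(r-1)) * inner v v \<le> lyapunov r C k y v w"
proof -
  define m where "m = C*k/(r-1)"
  have m: "(r - 1) * m = C*k" using r by (simp add: m_def)
  define e where "e = r *\<^sub>R w - m *\<^sub>R v"
  have "lyapunov r C k y v w - (2*C*r*k * inner v y + C*k*(k + r - C - m) * inner v v)
      = r^2*(r-1) * inner w w - 2*r*((r-1)*m) * inner v w + ((r-1)*m)*m * inner v v"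
    unfolding lyapunov_def m by (simp add: algebra_simps power2_eq_square)
  also have "\<dots> = (r - 1) * inner e e"
    unfolding e_def by (simp add: inner_diff_left inner_diff_right inner_commute algebra_simps power2_eq_square)
  also have "\<dots> \<ge> 0" using r by simp
  finally show ?thesis unfolding m_def by simp
qed

lemma lyapunov_bounds:
  fixes y v w :: "'a::real_inner" and k r C N :: real
  assumes r: "2 \<le> r" and C: "0 < C" "C \<le> 1" and k: "1 \<le> k"
    and firm: "inner v v \<le> inner v y"
    and bound: "lyapunov r C k y v w \<le> r^2*(r-1) * N"
  shows "inner v v \<le> (r^3 - r^2) * N / (C*k*(k + 3*r - C*(k+1)))"
    and "inner v y \<le> (r^2 - r) * N / (2*C*k)"
proof -
  define c where "c = k + r - C - C*k/(r-1)"
  have lower: "2*C*r*k * inner v y + C*k*c * inner v v \<le> r^2*(r-1) * N"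
    using lyapunov_lower_bound[of r C k v y w] bound r unfolding c_def by simp
  have "C*k*1 \<le> C*k*(r-1)" using r C k by (intro mult_left_mono) auto
  then have "C*k/(r-1) \<le> C*k" using r by (simp add: pos_divide_le_eq)
  then have c_ge: "k + r - C*(k+1) \<le> c" unfolding c_def by (simp add: algebra_simps)
  have "C*(k+1) \<le> k + r" using C k r by (smt (verit) mult_left_le_one_le)
  then have "0 \<le> c" using c_ge by linarith
  have vv: "0 \<le> inner v v" by simp
  have "0 \<le> C*k*c * inner v v" using \<open>0 \<le> c\<close> C k vv by simp
  then have "r * (2*C*k * inner v y) \<le> r * ((r^2 - r) * N)"
    using lower by (simp add: algebra_simps power2_eq_square)
  then have "2*C*k * inner v y \<le> (r^2 - r) * N" using r by simp
  then show "inner v y \<le> (r^2 - r) * N / (2*C*k)"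
    using C k by (simp add: pos_le_divide_eq mult.commute)
  have D_pos: "0 < C*k*(k + 3*r - C*(k+1))" using \<open>C*(k+1) \<le> k + r\<close> r C k by simp
  have "C*k*(k + 3*r - C*(k+1)) * inner v v \<le> C*k*(2*r + c) * inner v v"
    using c_ge C k vv by (intro mult_right_mono mult_left_mono) auto
  also have "\<dots> = 2*C*r*k * inner v v + C*k*c * inner v v" by (simp add: algebra_simps)
  also have "\<dots> \<le> r^2*(r-1) * N"
    using lower firm C k r by (smt (verit) mult_left_mono mult_nonneg_nonneg)
  also have "\<dots> = (r^3 - r^2) * N" by (simp add: algebra_simps power2_eq_square power3_eq_cube)
  finally show "inner v v \<le> (r^3 - r^2) * N / (C*k*(k + 3*r - C*(k+1)))"
    using D_pos by (simp add: pos_le_divide_eq mult.commute)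
qed

lemma lyapunov_decrease_yosida:
  fixes A :: "'a::euclidean_space \<Rightarrow> 'a set"
  assumes mm: "maximal_monotone A" and zero: "0 \<in> A xs"
    and r: "2 \<le> r" and C: "0 < C" "C \<le> 1" and k: "0 \<le> k"
    and z: "z = (k/r) *\<^sub>R (x' - x) + (1 + k/r) *\<^sub>R yosida A x' + x'"
    and z': "z' = z - (C/r) *\<^sub>R yosida A x'"
  shows "lyapunov r C (k + 1) (x' - xs) (yosida A x') (z' - xs) \<le> lyapunov r C k (x - xs) (yosida A x) (z - xs)"
proof -
  define a b u v where "a = x' - xs" and "b = x - xs" and "u = yosida A x'" and "v = yosida A x"
  have yosida_xs: "yosida A xs = 0"
    using maximal_monotone_imp_monotone_op[OF mm] zero by (rule yosida_eq_0)
  have z_xs: "z - xs = (k/r) *\<^sub>R (a - b) + (1 + k/r) *\<^sub>R u + a"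
    using z by (simp add: a_def b_def u_def)
  have "inner u u \<le> inner u a"
    using yosida_firmly_nonexpansive[OF mm, of x' xs] by (simp add: a_def u_def yosida_xs)
  moreover have "inner (u - v) (u - v) \<le> inner (u - v) (a - b)"
    using yosida_firmly_nonexpansive[OF mm, of x' x] by (simp add: a_def b_def u_def v_def)
  ultimately have decrease: "lyapunov r C (k + 1) a u ((z - xs) - (C/r) *\<^sub>R u) \<le> lyapunov r C k b v (z - xs)"
    unfolding z_xs by (rule lyapunov_decrease[OF r C k])
  have z'_xs: "z' - xs = (z - xs) - (C/r) *\<^sub>R u" using z' by (simp add: u_def)
  show ?thesis using decrease unfolding z'_xs a_def b_def u_def v_def .
qed

theorem theorem11:
  fixes A :: "real ^ 'n \<Rightarrow> (real ^ 'n) set"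
    and xs :: "real ^ 'n"
    and x z :: "nat \<Rightarrow> real ^ 'n"
    and r C :: real
  assumes mm: "maximal_monotone A"
    and zero: "0 \<in> A xs"
    and r: "r \<ge> 2"
    and C: "0 < C" "C \<le> 1"
    and init: "x 0 = z 0"
    and z_def: "\<And>k. z k = (real k / r) *\<^sub>R (x (Suc k) - x k)
                      + (1 + real k / r) *\<^sub>R yosida A (x (Suc k)) + x (Suc k)"
    and z_upd: "\<And>k. z (Suc k) = z k - (C / r) *\<^sub>R yosida A (x (Suc k))"
    and k: "k \<ge> 1"
  shows "(norm (yosida A (x k)))\<^sup>2
           \<le> (r^3 - r^2) * (norm (x 0 - xs))\<^sup>2
               / (C * real k * (real k + 3 * r - C * (real k + 1)))
       \<and> inner (yosida A (x k)) (x k - xs)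
           \<le> (r^2 - r) * (norm (x 0 - xs))\<^sup>2 / (2 * C * real k)"
proof -
  have yosida_xs: "yosida A xs = 0"
    using maximal_monotone_imp_monotone_op[OF mm] zero by (rule yosida_eq_0)
  define E where "E j = lyapunov r C (real j) (x j - xs) (yosida A (x j)) (z j - xs)" for j
  have E_step: "E (Suc j) \<le> E j" for j
    using lyapunov_decrease_yosida[OF mm zero r C, of "real j" "z j" "x (Suc j)" "x j" "z (Suc j)"]
      z_def[of j] z_upd[of j]
    by (simp add: E_def add.commute)
  have "E k \<le> E 0" using decseq_SucI[of E, OF E_step] by (rule decseqD) simp
  also have "E 0 = r^2*(r-1) * (norm (x 0 - xs))\<^sup>2"
    unfolding E_def lyapunov_def init by (simp add: power2_norm_eq_inner)
  finally have bound: "lyapunov r C (real k) (x k - xs) (yosida A (x k)) (z k - xs)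
      \<le> r^2*(r-1) * (norm (x 0 - xs))\<^sup>2"
    unfolding E_def .
  have firm_k: "inner (yosida A (x k)) (yosida A (x k)) \<le> inner (yosida A (x k)) (x k - xs)"
    using yosida_firmly_nonexpansive[OF mm, of "x k" xs] by (simp add: yosida_xs)
  have k_real: "1 \<le> real k" using k by simp
  show ?thesis
    using lyapunov_bounds[OF r C k_real firm_k bound] by (simp only: power2_norm_eq_inner)
qed

end
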